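(* Let $\mathcal G=(\mathcal V,\mathcal E)$ be a hypergraph with $\mathcal V=[n]$, all of whose edges are nonempty, with set of special vertices $\mathcal V^{\mathrm{sp}}\subseteq\mathcal V$. Then for every $q\in\mathbb Z$ we have, as formal power series in $\mathbb Q[[x_1,\dots,x_n]]$, \[ I^{\mathrm{mark}}(\mathcal G,x)^q=\sum_{\mathbf m\in\mathbb Z_{\ge0}^n}{}_{\mathbf m}\Pi^{\mathrm{mark}}_{\mathcal G}(q)\,x^{\mathbf m}, \] where ${}_{\mathbf m}\Pi^{\mathrm{mark}}_{\mathcal G}$ denotes the unique polynomial in $q$ whose value at each positive integer $q$ is the number of marked multi-colorings of $\mathcal G$ associated to $\mathbf m$ using at most $q$ colors (for $\mathbf m=\mathbf 0$ this polynomial is the constant $1$).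
   Context: A hypergraph $\mathcal G=(\mathcal V,\mathcal E)$ has vertex set $\mathcal V=[n]=\{1,\dots,n\}$ and edge set $\mathcal E$ a collection of subsets of $[n]$; $\mathcal V^{\mathrm{sp}}\subseteq\mathcal V$ is a fixed set of special vertices. A finite multiset $U$ with elements in $\mathcal V$ is marked-independent if its underlying set contains no edge $e\in\mathcal E$ and every vertex of $\mathcal V\setminus\mathcal V^{\mathrm{sp}}$ occurs at most once in $U$ (the empty multiset is marked-independent). For such $U$, $x(U)=\prod_v x_v^{r_v}$ where $v$ occurs $r_v$ times in $U$. The marked independence series is $I^{\mathrm{mark}}(\mathcal G,x)=\sum_U x(U)$, summed over all marked-independent multisets $U$; it has constant term $1$. For $\mathbf m=(m_v)\in\mathbb Z_{\ge0}^n$ and $q\in\mathbb N$, a marked multi-coloring of $\mathcal G$ associated to $\mathbf m$ using at most $q$ colors is a map $\Gamma$ assigning to each $v$ a finite multiset $\Gamma(v)$ with elements in $\{1,\dots,q\}$ such that $\Gamma(v)$ is a set for $v\notin\mathcal V^{\mathrm{sp}}$, $|\Gamma(v)|=m_v$ (with multiplicity), and for every $e\in\mathcal E$ the underlying sets of $\Gamma(v)$, $v\in e$, have empty common intersection; two colorings are distinct if they differ at some vertex. $x^{\mathbf m}=\prod_v x_v^{m_v}$. *)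

theory Defs
  imports Main "HOL-Library.Multiset" "HOL-Computational_Algebra.Polynomial"
begin

(* Multivariate formal power series over Q in the variables x_1..x_n are represented
   by their coefficient functions: a monomial x^m is an exponent vector m :: nat => nat
   (only monomials with support in {1..n} are relevant). *)

type_synonym mfps = "(nat \<Rightarrow> nat) \<Rightarrow> rat"

definition mon_supp :: "(nat \<Rightarrow> nat) \<Rightarrow> nat set" where
  "mon_supp m = {i. m i \<noteq> 0}"

definition mfps_mult :: "mfps \<Rightarrow> mfps \<Rightarrow> mfps" where
  "mfps_mult f g = (\<lambda>m. \<Sum>a\<in>{a. \<forall>i. a i \<le> m i}. f a * g (\<lambda>i. m i - a i))"

definition mfps_one :: mfps where
  "mfps_one = (\<lambda>m. if m = (\<lambda>_. 0) then 1 else 0)"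

primrec mfps_pow :: "mfps \<Rightarrow> nat \<Rightarrow> mfps" where
  "mfps_pow f 0 = mfps_one"
| "mfps_pow f (Suc k) = mfps_mult f (mfps_pow f k)"

definition mfps_inv :: "nat \<Rightarrow> mfps \<Rightarrow> mfps" where
  "mfps_inv n f = (THE g. (\<forall>m. \<not> mon_supp m \<subseteq> {1..n} \<longrightarrow> g m = 0) \<and>
      (\<forall>m. mon_supp m \<subseteq> {1..n} \<longrightarrow> mfps_mult g f m = mfps_one m))"

definition mfps_ipow :: "nat \<Rightarrow> mfps \<Rightarrow> int \<Rightarrow> mfps" where
  "mfps_ipow n f q = (if 0 \<le> q then mfps_pow f (nat q) else mfps_pow (mfps_inv n f) (nat (- q)))"

definition marked_indep :: "nat \<Rightarrow> nat set set \<Rightarrow> nat set \<Rightarrow> nat multiset \<Rightarrow> bool" where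
  "marked_indep n E Vsp U \<longleftrightarrow> set_mset U \<subseteq> {1..n} \<and> (\<forall>e\<in>E. \<not> e \<subseteq> set_mset U)
      \<and> (\<forall>v\<in>{1..n} - Vsp. count U v \<le> 1)"

definition I_mark :: "nat \<Rightarrow> nat set set \<Rightarrow> nat set \<Rightarrow> mfps" where
  "I_mark n E Vsp = (\<lambda>m. of_nat (card {U. marked_indep n E Vsp U \<and> (\<forall>v. count U v = m v)}))"

definition marked_colorings :: "nat \<Rightarrow> nat set set \<Rightarrow> nat set \<Rightarrow> (nat \<Rightarrow> nat) \<Rightarrow> nat \<Rightarrow> (nat \<Rightarrow> nat multiset) set" where
  "marked_colorings n E Vsp m q = {\<Gamma>.
      (\<forall>v. v \<notin> {1..n} \<longrightarrow> \<Gamma> v = {#}) \<and>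
      (\<forall>v\<in>{1..n}. set_mset (\<Gamma> v) \<subseteq> {1..q} \<and> size (\<Gamma> v) = m v \<and>
                    (v \<notin> Vsp \<longrightarrow> (\<forall>c. count (\<Gamma> v) c \<le> 1))) \<and>
      (\<forall>e\<in>E. (\<Inter>v\<in>e. set_mset (\<Gamma> v)) = {})}"

end

theory Submission
  imports Defs
begin

text \<open>Write I = 1 + J with J free of constant term. Since J^k only has monomials of degree at
  least k, the binomial expansion I^q = \<Sum>k. (q choose k) J^k shows that for q \<ge> 0 the
  coefficient of x^m in I^q is a polynomial P_m(q) of degree at most |m|. Let I^y, for rational y,
  be the series with coefficients P_m(y). The law I^y I^z = I^(y+z) holds coefficientwise for
  natural y and z, hence as a polynomial identity for all y and z. So I^(-1) is the inverse of I
  and I^(-p) is its p-th power: P_m(q) is the coefficient for every integer q.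

  For q > 0 the coefficient of x^m in I^q = I \<cdot> I^(q-1) counts the colourings with q colours:
  the vertices carrying the last colour, with multiplicity, form a marked-independent multiset,
  and removing that colour leaves a colouring with q - 1 colours.\<close>

section \<open>Monomials and Cauchy products\<close>

lemma mon_supp_mono: "a \<le> m \<Longrightarrow> mon_supp a \<subseteq> mon_supp m"
  by (auto simp: mon_supp_def le_fun_def) (metis less_le_trans)

lemma mon_supp_diff: "mon_supp (m - a) \<subseteq> mon_supp m"
  by (auto simp: mon_supp_def)

lemma finite_mon_supp_le: "finite (mon_supp m) \<Longrightarrow> a \<le> m \<Longrightarrow> finite (mon_supp a)"
  by (rule finite_subset[OF mon_supp_mono])

lemma finite_mon_supp_diff: "finite (mon_supp m) \<Longrightarrow> finite (mon_supp (m - a))"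
  by (rule finite_subset[OF mon_supp_diff])

lemma finite_mon_supp_subset: "mon_supp m \<subseteq> {1..n} \<Longrightarrow> finite (mon_supp m)"
  by (rule finite_subset) auto

lemma mon_supp_le_subset: "a \<le> m \<Longrightarrow> mon_supp m \<subseteq> S \<Longrightarrow> mon_supp a \<subseteq> S"
  by (rule order_trans[OF mon_supp_mono])

lemma mon_supp_diff_subset: "mon_supp m \<subseteq> S \<Longrightarrow> mon_supp (m - a) \<subseteq> S"
  by (rule order_trans[OF mon_supp_diff])

definition mon_degree :: "(nat \<Rightarrow> nat) \<Rightarrow> nat" where
  "mon_degree m = (\<Sum>i\<in>mon_supp m. m i)"

lemma mon_degree_eq_sum:
  assumes "finite S" "mon_supp m \<subseteq> S"
  shows "mon_degree m = (\<Sum>i\<in>S. m i)"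
  unfolding mon_degree_def using assms by (intro sum.mono_neutral_left) (auto simp: mon_supp_def)

lemma mon_degree_eq_0_iff:
  assumes "finite (mon_supp m)"
  shows "mon_degree m = 0 \<longleftrightarrow> m = (\<lambda>_. 0)"
  unfolding mon_degree_def using assms by (simp add: sum_eq_0_iff) (auto simp: mon_supp_def fun_eq_iff)

lemma mon_degree_add_diff:
  assumes fin: "finite (mon_supp m)" and "a \<le> m"
  shows "mon_degree a + mon_degree (m - a) = mon_degree m"
proof -
  have "mon_degree a + mon_degree (m - a) = (\<Sum>i\<in>mon_supp m. a i) + (\<Sum>i\<in>mon_supp m. m i - a i)"
    using mon_degree_eq_sum[OF fin mon_supp_mono[OF \<open>a \<le> m\<close>]] mon_degree_eq_sum[OF fin mon_supp_diff]
    by simp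
  also have "\<dots> = mon_degree m"
    using \<open>a \<le> m\<close> by (simp add: mon_degree_def le_fun_def flip: sum.distrib)
  finally show ?thesis .
qed

lemma mon_degree_less:
  assumes "finite (mon_supp m)" "a \<le> m" "a \<noteq> m"
  shows "mon_degree a < mon_degree m"
proof -
  have "m - a \<noteq> (\<lambda>_. 0)"
    using assms(2,3) by (auto simp: fun_eq_iff le_fun_def intro: antisym)
  then have "mon_degree (m - a) > 0"
    using mon_degree_eq_0_iff[OF finite_mon_supp_diff[OF assms(1), of a]] by simp
  then show ?thesis
    using mon_degree_add_diff[OF assms(1,2)] by linarith
qed

lemma finite_atMost_mon:
  assumes "finite (mon_supp m)"
  shows "finite {..m}"
proof (rule finite_subset)
  have "m i \<le> mon_degree m" if "i \<in> mon_supp m" for i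
    unfolding mon_degree_def using assms that by (intro member_le_sum) auto
  then show "{..m} \<subseteq> {a. \<forall>i. (i \<in> mon_supp m \<longrightarrow> a i \<in> {..mon_degree m}) \<and> (i \<notin> mon_supp m \<longrightarrow> a i = 0)}"
    by (auto simp: mon_supp_def le_fun_def) (metis le_trans, metis le_zero_eq)
  show "finite {a. \<forall>i. (i \<in> mon_supp m \<longrightarrow> a i \<in> {..mon_degree m}) \<and> (i \<notin> mon_supp m \<longrightarrow> a i = (0::nat))}"
    using assms by (intro finite_set_of_finite_funs) auto
qed

text \<open>Exponent vectors are compared and subtracted pointwise, via the order and minus instances of
  functions, so the Cauchy product sums over the interval \<open>{..m}\<close>.\<close>

lemma mfps_mult_eq: "mfps_mult f g m = (\<Sum>a\<le>m. f a * g (m - a))"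
  by (simp add: mfps_mult_def atMost_def le_fun_def fun_diff_def)

lemma mfps_mult_cong:
  assumes "\<And>a. a \<le> m \<Longrightarrow> f a = f' a" and "\<And>a. a \<le> m \<Longrightarrow> g (m - a) = g' (m - a)"
  shows "mfps_mult f g m = mfps_mult f' g' m"
  unfolding mfps_mult_eq using assms by (intro sum.cong) auto

lemma mfps_mult_one_left:
  assumes "finite (mon_supp m)"
  shows "mfps_mult mfps_one g m = g m"
proof -
  have "mfps_mult mfps_one g m = (\<Sum>a\<le>m. if a = (\<lambda>_. 0) then g (m - a) else 0)"
    unfolding mfps_mult_eq mfps_one_def by (intro sum.cong) auto
  also have "\<dots> = g m"
    using finite_atMost_mon[OF assms] by (simp add: le_fun_def fun_diff_def)
  finally show ?thesis .
qed

lemma mfps_mult_one_right: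
  assumes "finite (mon_supp m)"
  shows "mfps_mult g mfps_one m = g m"
proof -
  have "m - a = (\<lambda>_. 0) \<longleftrightarrow> a = m" if "a \<le> m" for a
    using that by (auto simp: le_fun_def fun_eq_iff intro: le_antisym)
  then have "mfps_mult g mfps_one m = (\<Sum>a\<le>m. if a = m then g a else 0)"
    unfolding mfps_mult_eq mfps_one_def by (intro sum.cong) auto
  also have "\<dots> = g m"
    using finite_atMost_mon[OF assms] by simp
  finally show ?thesis .
qed

lemma mfps_mult_assoc:
  assumes fin: "finite (mon_supp m)"
  shows "mfps_mult f (mfps_mult g h) m = mfps_mult (mfps_mult f g) h m"
proof -
  have fin_le: "finite {..c}" if "c \<le> m" for c
    by (intro finite_atMost_mon finite_mon_supp_le[OF fin that])
  have fin_diff: "finite {..m - a}" for a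
    by (intro finite_atMost_mon finite_mon_supp_diff[OF fin])
  have "mfps_mult f (mfps_mult g h) m =
      (\<Sum>(a, b)\<in>Sigma {..m} (\<lambda>a. {..m - a}). f a * (g b * h (m - a - b)))"
    unfolding mfps_mult_eq
    by (subst sum.Sigma[symmetric]) (auto simp: finite_atMost_mon[OF fin] fin_diff sum_distrib_left)
  also have "\<dots> = (\<Sum>(c, a)\<in>Sigma {..m} atMost. f a * g (c - a) * h (m - c))"
    by (rule sum.reindex_bij_witness[where i = "\<lambda>(c, a). (a, c - a)" and j = "\<lambda>(a, b). (\<lambda>i. a i + b i, a)"])
      (auto simp: le_fun_def fun_eq_iff fun_diff_def diff_diff_left intro: order_trans,
        (metis le_diff_conv2 add.commute diff_le_mono)+)
  also have "\<dots> = mfps_mult (mfps_mult f g) h m"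
    unfolding mfps_mult_eq
    by (subst sum.Sigma[symmetric]) (auto simp: finite_atMost_mon[OF fin] fin_le sum_distrib_right)
  finally show ?thesis .
qed

lemma mfps_pow_add:
  assumes "finite (mon_supp m)"
  shows "mfps_pow f (q + r) m = mfps_mult (mfps_pow f q) (mfps_pow f r) m"
  using assms
proof (induction q arbitrary: m)
  case 0
  then show ?case by (simp add: mfps_mult_one_left)
next
  case (Suc q)
  note fin = finite_mon_supp_diff[OF Suc.prems]
  have "mfps_pow f (Suc q + r) m = mfps_mult f (mfps_pow f (q + r)) m"
    by simp
  also have "\<dots> = mfps_mult f (mfps_mult (mfps_pow f q) (mfps_pow f r)) m"
  proof (rule mfps_mult_cong)
    show "mfps_pow f (q + r) (m - a) = mfps_mult (mfps_pow f q) (mfps_pow f r) (m - a)" for a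
      by (rule Suc.IH[OF fin])
  qed simp
  also have "\<dots> = mfps_mult (mfps_pow f (Suc q)) (mfps_pow f r) m"
    using mfps_mult_assoc[OF Suc.prems] by simp
  finally show ?case .
qed

section \<open>Powers as polynomials in the exponent\<close>

definition mfps_nonconst :: "mfps \<Rightarrow> mfps" where
  "mfps_nonconst f = (\<lambda>a. if a = (\<lambda>_. 0) then 0 else f a)"

lemma mfps_pow_nonconst_eq_0:
  assumes "finite (mon_supp m)" "mon_degree m < k"
  shows "mfps_pow (mfps_nonconst f) k m = 0"
  using assms
proof (induction k arbitrary: m)
  case (Suc k)
  have "mfps_nonconst f a * mfps_pow (mfps_nonconst f) k (m - a) = 0" if "a \<le> m" for a
  proof (cases "a = (\<lambda>_. 0)")
    case False
    have "mon_degree a > 0"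
      using mon_degree_eq_0_iff[OF finite_mon_supp_le[OF Suc.prems(1) that]] False by simp
    then have "mon_degree (m - a) < k"
      using mon_degree_add_diff[OF Suc.prems(1) that] Suc.prems(2) by linarith
    then have "mfps_pow (mfps_nonconst f) k (m - a) = 0"
      by (rule Suc.IH[OF finite_mon_supp_diff[OF Suc.prems(1)]])
    then show ?thesis by simp
  qed (simp add: mfps_nonconst_def)
  then show ?case
    unfolding mfps_pow.simps mfps_mult_eq by (intro sum.neutral) simp
qed simp

lemma sum_choose_Suc_split:
  fixes F :: "nat \<Rightarrow> 'a :: comm_semiring_1"
  shows "(\<Sum>k\<le>Suc q. of_nat (Suc q choose k) * F k) =
     (\<Sum>k\<le>q. of_nat (q choose k) * F k) + (\<Sum>k\<le>q. of_nat (q choose k) * F (Suc k))"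
proof -
  have "(\<Sum>k\<le>q. of_nat (q choose k) * F k) = (\<Sum>k\<le>Suc q. of_nat (q choose k) * F k)"
    by (simp add: binomial_eq_0)
  also have "\<dots> = F 0 + (\<Sum>k\<le>q. of_nat (q choose Suc k) * F (Suc k))"
    by (subst sum.atMost_Suc_shift) simp
  finally show ?thesis
    by (subst sum.atMost_Suc_shift) (simp add: sum.distrib algebra_simps)
qed

definition gbinomial_poly :: "nat \<Rightarrow> 'a :: field_char_0 poly" where
  "gbinomial_poly k = smult (1 / fact k) (\<Prod>i<k. [:- of_nat i, 1:])"

lemma poly_gbinomial_poly: "poly (gbinomial_poly k) x = x gchoose k"
  by (simp add: gbinomial_poly_def poly_prod gbinomial_prod_rev atLeast0LessThan)

lemma poly_eqI_of_nat:
  fixes p p' :: "'a :: {idom, ring_char_0} poly"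
  assumes "\<And>q. poly p (of_nat q) = poly p' (of_nat q)"
  shows "p = p'"
proof (rule ccontr)
  assume "p \<noteq> p'"
  then have "finite {x. poly (p - p') x = 0}"
    by (intro poly_roots_finite) simp
  moreover have "range of_nat \<subseteq> {x. poly (p - p') x = 0}"
    using assms by auto
  moreover have "infinite (range (of_nat :: nat \<Rightarrow> 'a))"
    by (intro range_inj_infinite inj_of_nat)
  ultimately show False
    using finite_subset by blast
qed

text \<open>Extend in one argument at a time: with the other one fixed, both sides are polynomials.\<close>

lemma poly_add_eq_sum_if_of_nat:
  fixes p :: "'a :: {idom, ring_char_0} poly"
  assumes "\<And>q r. poly p (of_nat q + of_nat r) = (\<Sum>a\<in>A. poly (u a) (of_nat q) * poly (v a) (of_nat r))"
  shows "poly p (x + y) = (\<Sum>a\<in>A. poly (u a) x * poly (v a) y)"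
proof -
  have shift: "pcompose p [:of_nat r, 1:] = (\<Sum>a\<in>A. smult (poly (v a) (of_nat r)) (u a))" for r
    by (rule poly_eqI_of_nat) (simp add: poly_pcompose poly_sum assms add.commute mult.commute)
  have half: "poly p (x + of_nat r) = (\<Sum>a\<in>A. poly (u a) x * poly (v a) (of_nat r))" for r
    using arg_cong[where f = "\<lambda>p. poly p x", OF shift[of r]]
    by (simp add: poly_pcompose poly_sum add.commute mult.commute)
  have "pcompose p [:x, 1:] = (\<Sum>a\<in>A. smult (poly (u a) x) (v a))"
    by (rule poly_eqI_of_nat) (simp add: poly_pcompose poly_sum half)
  from arg_cong[where f = "\<lambda>p. poly p y", OF this] show ?thesis
    by (simp add: poly_pcompose poly_sum add.commute)
qed

text \<open>The polynomial P_m of the outline: the sum can stop at the degree of m because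
  J^k = (mfps_nonconst f)^k has no monomials of degree below k.\<close>

definition mfps_power_poly :: "mfps \<Rightarrow> (nat \<Rightarrow> nat) \<Rightarrow> rat poly" where
  "mfps_power_poly f m =
     (\<Sum>k\<le>mon_degree m. smult (mfps_pow (mfps_nonconst f) k m) (gbinomial_poly k))"

text \<open>The power f^y for rational y. It vanishes off the monomials in x_1, ..., x_n, as
  \<^const>\<open>mfps_inv\<close> requires of an inverse.\<close>

definition mfps_binomial_pow :: "nat \<Rightarrow> mfps \<Rightarrow> rat \<Rightarrow> mfps" where
  "mfps_binomial_pow n f y =
     (\<lambda>a. if mon_supp a \<subseteq> {1..n} then poly (mfps_power_poly f a) y else 0)"

context
  fixes f :: mfps
  assumes const_coeff: "f (\<lambda>_. 0) = 1"
begin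

lemma mfps_pow_binomial_expansion:
  assumes "finite (mon_supp m)"
  shows "mfps_pow f q m = (\<Sum>k\<le>q. of_nat (q choose k) * mfps_pow (mfps_nonconst f) k m)"
  using assms
proof (induction q arbitrary: m)
  case (Suc q)
  let ?J = "mfps_nonconst f"
  have f_split: "f a = mfps_one a + ?J a" for a
    by (simp add: mfps_one_def mfps_nonconst_def const_coeff)
  note fin = finite_mon_supp_diff[OF Suc.prems]
  have "f a * mfps_pow f q (m - a) =
      (mfps_one a + ?J a) * (\<Sum>k\<le>q. of_nat (q choose k) * mfps_pow ?J k (m - a))" for a
    by (simp only: f_split[of a] Suc.IH[OF fin])
  then have "mfps_pow f (Suc q) m = (\<Sum>a\<le>m. (mfps_one a + ?J a) *
      (\<Sum>k\<le>q. of_nat (q choose k) * mfps_pow ?J k (m - a)))"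
    by (simp add: mfps_mult_eq)
  also have "\<dots> = (\<Sum>k\<le>q. of_nat (q choose k) * mfps_mult mfps_one (mfps_pow ?J k) m)
      + (\<Sum>k\<le>q. of_nat (q choose k) * mfps_pow ?J (Suc k) m)"
    by (simp add: mfps_mult_eq distrib_left distrib_right sum.distrib sum_distrib_left mult_ac sum.swap[of _ "{..m}"])
  also have "\<dots> = (\<Sum>k\<le>Suc q. of_nat (Suc q choose k) * mfps_pow ?J k m)"
    by (simp only: mfps_mult_one_left[OF Suc.prems] sum_choose_Suc_split)
  finally show ?case .
qed simp

lemma poly_mfps_power_poly_of_nat:
  assumes fin: "finite (mon_supp m)"
  shows "poly (mfps_power_poly f m) (of_nat q) = mfps_pow f q m"
proof -
  let ?c = "\<lambda>k. of_nat (q choose k) * mfps_pow (mfps_nonconst f) k m"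
  have "poly (mfps_power_poly f m) (of_nat q) = (\<Sum>k\<le>mon_degree m. ?c k)"
    unfolding mfps_power_poly_def poly_sum poly_smult poly_gbinomial_poly binomial_gbinomial
    by (simp add: mult.commute)
  also have "\<dots> = (\<Sum>k\<le>max q (mon_degree m). ?c k)"
    by (rule sum.mono_neutral_left) (auto simp: mfps_pow_nonconst_eq_0[OF fin])
  also have "\<dots> = (\<Sum>k\<le>q. ?c k)"
    by (rule sum.mono_neutral_right) auto
  also have "\<dots> = mfps_pow f q m"
    by (rule mfps_pow_binomial_expansion[OF fin, symmetric])
  finally show ?thesis .
qed

lemma poly_mfps_power_poly_add:
  assumes fin: "finite (mon_supp m)"
  shows "poly (mfps_power_poly f m) (x + y) =
    (\<Sum>a\<le>m. poly (mfps_power_poly f a) x * poly (mfps_power_poly f (m - a)) y)"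
proof (rule poly_add_eq_sum_if_of_nat)
  fix q r
  have "poly (mfps_power_poly f m) (of_nat q + of_nat r) = mfps_mult (mfps_pow f q) (mfps_pow f r) m"
    by (simp add: poly_mfps_power_poly_of_nat[OF fin] mfps_pow_add[OF fin] flip: of_nat_add)
  also have "\<dots> = (\<Sum>a\<le>m. poly (mfps_power_poly f a) (of_nat q) * poly (mfps_power_poly f (m - a)) (of_nat r))"
    unfolding mfps_mult_eq
    by (intro sum.cong refl)
      (simp add: poly_mfps_power_poly_of_nat finite_mon_supp_le[OF fin] finite_mon_supp_diff[OF fin])
  finally show "poly (mfps_power_poly f m) (of_nat q + of_nat r) =
    (\<Sum>a\<le>m. poly (mfps_power_poly f a) (of_nat q) * poly (mfps_power_poly f (m - a)) (of_nat r))" .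
qed

lemma mfps_binomial_pow_of_nat:
  assumes "mon_supp m \<subseteq> {1..n}"
  shows "mfps_binomial_pow n f (of_nat q) m = mfps_pow f q m"
  using assms by (simp add: mfps_binomial_pow_def poly_mfps_power_poly_of_nat finite_mon_supp_subset)

lemma mfps_mult_binomial_pow:
  assumes supp: "mon_supp m \<subseteq> {1..n}"
  shows "mfps_mult (mfps_binomial_pow n f y) (mfps_binomial_pow n f z) m =
    mfps_binomial_pow n f (y + z) m"
proof -
  have "mfps_mult (mfps_binomial_pow n f y) (mfps_binomial_pow n f z) m =
      (\<Sum>a\<le>m. poly (mfps_power_poly f a) y * poly (mfps_power_poly f (m - a)) z)"
    unfolding mfps_mult_eq
  proof (rule sum.cong[OF refl])
    fix a
    assume "a \<in> {..m}"
    then have "mon_supp a \<subseteq> {1..n}" "mon_supp (m - a) \<subseteq> {1..n}"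
      using mon_supp_le_subset[OF _ supp] mon_supp_diff_subset[OF supp] by auto
    then show "mfps_binomial_pow n f y a * mfps_binomial_pow n f z (m - a) =
        poly (mfps_power_poly f a) y * poly (mfps_power_poly f (m - a)) z"
      by (simp add: mfps_binomial_pow_def)
  qed
  also have "\<dots> = mfps_binomial_pow n f (y + z) m"
    using supp by (simp add: mfps_binomial_pow_def poly_mfps_power_poly_add finite_mon_supp_subset)
  finally show ?thesis .
qed

lemma mfps_pow_binomial_pow:
  assumes "mon_supp m \<subseteq> {1..n}"
  shows "mfps_pow (mfps_binomial_pow n f y) p m = mfps_binomial_pow n f (of_nat p * y) m"
  using assms
proof (induction p arbitrary: m)
  case 0
  then show ?case
    using mfps_binomial_pow_of_nat[OF 0, of 0] by simp
next
  case (Suc p)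
  have "mfps_pow (mfps_binomial_pow n f y) (Suc p) m =
      mfps_mult (mfps_binomial_pow n f y) (mfps_binomial_pow n f (of_nat p * y)) m"
    unfolding mfps_pow.simps
  proof (rule mfps_mult_cong)
    show "mfps_pow (mfps_binomial_pow n f y) p (m - a) = mfps_binomial_pow n f (of_nat p * y) (m - a)"
      for a by (rule Suc.IH[OF mon_supp_diff_subset[OF Suc.prems]])
  qed simp
  also have "\<dots> = mfps_binomial_pow n f (of_nat (Suc p) * y) m"
    by (simp add: mfps_mult_binomial_pow[OF Suc.prems] algebra_simps)
  finally show ?case .
qed

lemma mfps_mult_binomial_pow_inverse:
  assumes supp: "mon_supp m \<subseteq> {1..n}"
  shows "mfps_mult (mfps_binomial_pow n f (- 1)) f m = mfps_one m"
proof -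
  have "mfps_mult (mfps_binomial_pow n f (- 1)) f m =
      mfps_mult (mfps_binomial_pow n f (- 1)) (mfps_binomial_pow n f 1) m"
  proof (rule mfps_mult_cong)
    show "f (m - a) = mfps_binomial_pow n f 1 (m - a)" for a
      using mfps_binomial_pow_of_nat[of "m - a" n 1, OF mon_supp_diff_subset[OF supp]]
      by (simp add: mfps_mult_one_right finite_mon_supp_subset[OF mon_supp_diff_subset[OF supp]])
  qed simp
  also have "\<dots> = mfps_binomial_pow n f 0 m"
    by (simp add: mfps_mult_binomial_pow[OF supp])
  also have "\<dots> = mfps_one m"
    using mfps_binomial_pow_of_nat[OF supp, of 0] by simp
  finally show ?thesis .
qed

lemma mfps_mult_right_cancel:
  assumes "\<And>a. a \<le> m \<Longrightarrow> mfps_mult g f a = mfps_mult h f a" and "finite (mon_supp m)"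
  shows "g m = h m"
  using assms
proof (induction "mon_degree m" arbitrary: m rule: less_induct)
  case less
  have "m - m = (\<lambda>_. 0)"
    by (simp add: fun_eq_iff)
  then have split: "mfps_mult k f m = k m + (\<Sum>a\<in>{..m} - {m}. k a * f (m - a))" for k
    by (simp add: mfps_mult_eq const_coeff sum.remove[OF finite_atMost_mon[OF less.prems(2)], of m])
  have "g a = h a" if "a \<in> {..m} - {m}" for a
  proof (rule less.hyps)
    show "mon_degree a < mon_degree m" "finite (mon_supp a)"
      using that mon_degree_less[OF less.prems(2)] finite_mon_supp_le[OF less.prems(2)] by auto
    show "mfps_mult g f b = mfps_mult h f b" if "b \<le> a" for b
      using that \<open>a \<in> {..m} - {m}\<close> by (auto intro: less.prems(1) order_trans)
  qed
  then show ?case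
    using less.prems(1)[of m] split[of g] split[of h] by simp
qed

lemma mfps_inv_eq_binomial_pow: "mfps_inv n f = mfps_binomial_pow n f (- 1)"
  unfolding mfps_inv_def
proof (rule the_equality)
  show "(\<forall>m. \<not> mon_supp m \<subseteq> {1..n} \<longrightarrow> mfps_binomial_pow n f (- 1) m = 0) \<and>
      (\<forall>m. mon_supp m \<subseteq> {1..n} \<longrightarrow> mfps_mult (mfps_binomial_pow n f (- 1)) f m = mfps_one m)"
    by (simp add: mfps_mult_binomial_pow_inverse) (simp add: mfps_binomial_pow_def)
next
  fix g
  assume g: "(\<forall>m. \<not> mon_supp m \<subseteq> {1..n} \<longrightarrow> g m = 0) \<and>
      (\<forall>m. mon_supp m \<subseteq> {1..n} \<longrightarrow> mfps_mult g f m = mfps_one m)"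
  show "g = mfps_binomial_pow n f (- 1)"
  proof
    fix m
    show "g m = mfps_binomial_pow n f (- 1) m"
    proof (cases "mon_supp m \<subseteq> {1..n}")
      case True
      show ?thesis
      proof (rule mfps_mult_right_cancel[OF _ finite_mon_supp_subset[OF True]])
        fix a
        assume "a \<le> m"
        then have "mon_supp a \<subseteq> {1..n}"
          using True by (rule mon_supp_le_subset)
        then show "mfps_mult g f a = mfps_mult (mfps_binomial_pow n f (- 1)) f a"
          using g by (simp add: mfps_mult_binomial_pow_inverse)
      qed
    next
      case False
      then show ?thesis
        using g by (simp add: mfps_binomial_pow_def)
    qed
  qed
qed

lemma mfps_ipow_eq_poly:
  assumes supp: "mon_supp m \<subseteq> {1..n}"
  shows "mfps_ipow n f q m = poly (mfps_power_poly f m) (of_int q)"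
proof (cases "0 \<le> q")
  case True
  then have "of_int q = (of_nat (nat q) :: rat)"
    by simp
  then show ?thesis
    using True poly_mfps_power_poly_of_nat[OF finite_mon_supp_subset[OF supp], of "nat q"]
    by (simp add: mfps_ipow_def)
next
  case False
  then have "mfps_ipow n f q m = mfps_pow (mfps_binomial_pow n f (- 1)) (nat (- q)) m"
    by (simp add: mfps_ipow_def mfps_inv_eq_binomial_pow)
  also have "\<dots> = mfps_binomial_pow n f (of_nat (nat (- q)) * - 1) m"
    by (rule mfps_pow_binomial_pow[OF supp])
  also have "\<dots> = poly (mfps_power_poly f m) (of_int q)"
    using False supp by (simp add: mfps_binomial_pow_def)
  finally show ?thesis .
qed

end

section \<open>Marked multi-colourings\<close>

definition mon_mset :: "nat \<Rightarrow> (nat \<Rightarrow> nat) \<Rightarrow> nat multiset" where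
  "mon_mset n a = (\<Sum>v\<in>{1..n}. replicate_mset (a v) v)"

lemma count_mon_mset: "count (mon_mset n a) v = (if v \<in> {1..n} then a v else 0)"
  unfolding mon_mset_def count_sum by (simp add: count_replicate_mset)

lemma in_mon_mset_iff: "v \<in># mon_mset n a \<longleftrightarrow> v \<in> {1..n} \<and> a v > 0"
  by (simp only: count_greater_zero_iff[symmetric] count_mon_mset) auto

lemma I_mark_eq:
  assumes "mon_supp a \<subseteq> {1..n}"
  shows "I_mark n E Vsp a = (if marked_indep n E Vsp (mon_mset n a) then 1 else 0)"
proof -
  have "count (mon_mset n a) v = a v" for v
    using assms unfolding count_mon_mset mon_supp_def by fastforce
  then have "(\<forall>v. count U v = a v) \<longleftrightarrow> U = mon_mset n a" for U
    by (auto simp: multiset_eq_iff)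
  then have "{U. marked_indep n E Vsp U \<and> (\<forall>v. count U v = a v)} =
      (if marked_indep n E Vsp (mon_mset n a) then {mon_mset n a} else {})"
    by auto
  then show ?thesis
    by (simp add: I_mark_def)
qed

lemma I_mark_zero:
  assumes "{} \<notin> E"
  shows "I_mark n E Vsp (\<lambda>_. 0) = 1"
proof -
  have "mon_mset n (\<lambda>_. 0) = {#}"
    by (simp add: mon_mset_def)
  moreover have "marked_indep n E Vsp {#}"
    using assms by (auto simp: marked_indep_def)
  ultimately show ?thesis
    by (subst I_mark_eq) (auto simp: mon_supp_def)
qed

lemma marked_coloringsD:
  assumes "\<Gamma> \<in> marked_colorings n E Vsp m q"
  shows "v \<notin> {1..n} \<Longrightarrow> \<Gamma> v = {#}"
    and "v \<in> {1..n} \<Longrightarrow> set_mset (\<Gamma> v) \<subseteq> {1..q}"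
    and "v \<in> {1..n} \<Longrightarrow> size (\<Gamma> v) = m v"
    and "v \<in> {1..n} \<Longrightarrow> v \<notin> Vsp \<Longrightarrow> count (\<Gamma> v) c \<le> 1"
    and "e \<in> E \<Longrightarrow> (\<Inter>v\<in>e. set_mset (\<Gamma> v)) = {}"
  using assms unfolding marked_colorings_def by blast+

lemma finite_marked_colorings: "finite (marked_colorings n E Vsp m q)"
proof (rule finite_subset)
  define B where "B = (\<Union>k\<le>Max (m ` {1..n}). multisets_of_size {1..q} k)"
  show "finite {\<Gamma>. \<forall>v. (v \<in> {1..n} \<longrightarrow> \<Gamma> v \<in> B) \<and> (v \<notin> {1..n} \<longrightarrow> \<Gamma> v = {#})}"
    by (rule finite_set_of_finite_funs) (auto simp: B_def)
  have "m v \<le> Max (m ` {1..n})" if "v \<in> {1..n}" for v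
    using that by (intro Max_ge) auto
  then show "marked_colorings n E Vsp m q \<subseteq>
      {\<Gamma>. \<forall>v. (v \<in> {1..n} \<longrightarrow> \<Gamma> v \<in> B) \<and> (v \<notin> {1..n} \<longrightarrow> \<Gamma> v = {#})}"
    by (auto simp: marked_colorings_def B_def multisets_of_size_def)
qed

lemma card_marked_colorings_0:
  assumes "{} \<notin> E" and supp: "mon_supp m \<subseteq> {1..n}"
  shows "of_nat (card (marked_colorings n E Vsp m 0)) = mfps_one m"
proof (cases "m = (\<lambda>_. 0)")
  case True
  have "marked_colorings n E Vsp m 0 = {\<lambda>_. {#}}"
  proof safe
    fix \<Gamma>
    assume "\<Gamma> \<in> marked_colorings n E Vsp m 0"
    then show "\<Gamma> = (\<lambda>_. {#})"
      by (auto simp: fun_eq_iff marked_colorings_def True)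
  next
    show "(\<lambda>_. {#}) \<in> marked_colorings n E Vsp m 0"
      using assms(1) by (auto simp: marked_colorings_def True)
  qed
  then show ?thesis
    using True by (simp add: mfps_one_def)
next
  case False
  then obtain v where "m v \<noteq> 0"
    by auto
  moreover have "v \<in> {1..n}"
    using \<open>m v \<noteq> 0\<close> supp by (auto simp: mon_supp_def)
  ultimately have False if "\<Gamma> \<in> marked_colorings n E Vsp m 0" for \<Gamma>
    using marked_coloringsD(2,3)[OF that] by simp
  then have "marked_colorings n E Vsp m 0 = {}"
    by blast
  then show ?thesis
    using False by (simp add: mfps_one_def)
qed

definition colorings_with_top_color ::
    "nat \<Rightarrow> nat set set \<Rightarrow> nat set \<Rightarrow> (nat \<Rightarrow> nat) \<Rightarrow> nat \<Rightarrow> (nat \<Rightarrow> nat) \<Rightarrow> (nat \<Rightarrow> nat multiset) set" where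
  "colorings_with_top_color n E Vsp m q a =
     {\<Gamma> \<in> marked_colorings n E Vsp m (Suc q). \<forall>v. count (\<Gamma> v) (Suc q) = a v}"

lemma marked_indep_top_color:
  assumes "\<Gamma> \<in> colorings_with_top_color n E Vsp m q a"
  shows "marked_indep n E Vsp (mon_mset n a)"
proof -
  have \<Gamma>: "\<Gamma> \<in> marked_colorings n E Vsp m (Suc q)" and count_top: "\<And>v. count (\<Gamma> v) (Suc q) = a v"
    using assms by (auto simp: colorings_with_top_color_def)
  have "\<not> e \<subseteq> set_mset (mon_mset n a)" if "e \<in> E" for e
  proof
    assume e_sub: "e \<subseteq> set_mset (mon_mset n a)"
    have "Suc q \<in># \<Gamma> v" if "v \<in> e" for v
    proof -
      have "a v > 0"
        using e_sub that by (auto simp: in_mon_mset_iff)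
      then show ?thesis
        using count_top[of v] by (simp flip: count_greater_zero_iff)
    qed
    then have "Suc q \<in> (\<Inter>v\<in>e. set_mset (\<Gamma> v))"
      by blast
    then show False
      using marked_coloringsD(5)[OF \<Gamma> \<open>e \<in> E\<close>] by blast
  qed
  moreover have "count (mon_mset n a) v \<le> 1" if "v \<in> {1..n} - Vsp" for v
    using marked_coloringsD(4)[OF \<Gamma>, of v "Suc q"] that count_top[of v] by (simp add: count_mon_mset)
  ultimately show ?thesis
    by (auto simp: marked_indep_def in_mon_mset_iff)
qed

lemma top_color_not_in:
  assumes "\<Gamma> \<in> marked_colorings n E Vsp m q"
  shows "Suc q \<notin># \<Gamma> v"
proof (cases "v \<in> {1..n}")
  case True
  then show ?thesis
    using marked_coloringsD(2)[OF assms True] by auto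
qed (simp add: marked_coloringsD(1)[OF assms])

lemma add_top_color_edges:
  assumes \<Gamma>': "\<Gamma>' \<in> marked_colorings n E Vsp m q" and supp: "mon_supp a \<subseteq> {1..n}"
    and indep: "marked_indep n E Vsp (mon_mset n a)" and "e \<in> E"
  shows "(\<Inter>v\<in>e. set_mset (\<Gamma>' v + replicate_mset (a v) (Suc q))) = {}"
proof (rule ccontr)
  assume "(\<Inter>v\<in>e. set_mset (\<Gamma>' v + replicate_mset (a v) (Suc q))) \<noteq> {}"
  then obtain c where c: "\<And>v. v \<in> e \<Longrightarrow> c \<in># \<Gamma>' v + replicate_mset (a v) (Suc q)"
    by auto
  show False
  proof (cases "c = Suc q")
    case True
    have "a v > 0" if "v \<in> e" for v
      using c[OF that] True top_color_not_in[OF \<Gamma>', of v] by (simp split: if_split_asm)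
    then have "e \<subseteq> set_mset (mon_mset n a)"
      using supp by (force simp: in_mon_mset_iff mon_supp_def)
    then show False
      using indep \<open>e \<in> E\<close> by (auto simp: marked_indep_def)
  next
    case False
    have "c \<in># \<Gamma>' v" if "v \<in> e" for v
      using c[OF that] False by (simp split: if_split_asm)
    then show False
      using marked_coloringsD(5)[OF \<Gamma>' \<open>e \<in> E\<close>] by blast
  qed
qed

lemma add_top_color:
  assumes \<Gamma>': "\<Gamma>' \<in> marked_colorings n E Vsp (m - a) q" and "a \<le> m"
    and supp: "mon_supp a \<subseteq> {1..n}" and indep: "marked_indep n E Vsp (mon_mset n a)"
  shows "(\<lambda>v. \<Gamma>' v + replicate_mset (a v) (Suc q)) \<in> colorings_with_top_color n E Vsp m q a"
proof -
  define \<Gamma> where "\<Gamma> = (\<lambda>v. \<Gamma>' v + replicate_mset (a v) (Suc q))"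
  have count_top: "count (\<Gamma> v) (Suc q) = a v" for v
    using top_color_not_in[OF \<Gamma>', of v] by (simp add: \<Gamma>_def not_in_iff)
  have "\<Gamma> \<in> marked_colorings n E Vsp m (Suc q)"
    unfolding marked_colorings_def
  proof (intro CollectI conjI allI ballI impI)
    fix v
    assume "v \<notin> {1..n}"
    then show "\<Gamma> v = {#}"
      using marked_coloringsD(1)[OF \<Gamma>'] supp by (auto simp: \<Gamma>_def mon_supp_def)
  next
    fix v
    assume v: "v \<in> {1..n}"
    show "set_mset (\<Gamma> v) \<subseteq> {1..Suc q}"
      using marked_coloringsD(2)[OF \<Gamma>' v] by (auto simp: \<Gamma>_def)
    show "size (\<Gamma> v) = m v"
      using marked_coloringsD(3)[OF \<Gamma>' v] le_funD[OF \<open>a \<le> m\<close>, of v] by (simp add: \<Gamma>_def)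
    fix c
    assume "v \<notin> Vsp"
    moreover have "a v \<le> 1"
      using indep v \<open>v \<notin> Vsp\<close> by (auto simp: marked_indep_def count_mon_mset)
    ultimately show "count (\<Gamma> v) c \<le> 1"
      using marked_coloringsD(4)[OF \<Gamma>' v] top_color_not_in[OF \<Gamma>', of v]
      by (cases "c = Suc q") (auto simp: \<Gamma>_def not_in_iff)
  next
    fix e
    assume "e \<in> E"
    then show "(\<Inter>v\<in>e. set_mset (\<Gamma> v)) = {}"
      unfolding \<Gamma>_def by (rule add_top_color_edges[OF \<Gamma>' supp indep])
  qed
  then show ?thesis
    using count_top by (simp add: colorings_with_top_color_def \<Gamma>_def)
qed

lemma remove_top_color:
  assumes "\<Gamma> \<in> colorings_with_top_color n E Vsp m q a"
  shows "(\<lambda>v. \<Gamma> v - replicate_mset (a v) (Suc q)) \<in> marked_colorings n E Vsp (m - a) q"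
proof -
  have \<Gamma>: "\<Gamma> \<in> marked_colorings n E Vsp m (Suc q)" and count_top: "\<And>v. count (\<Gamma> v) (Suc q) = a v"
    using assms by (auto simp: colorings_with_top_color_def)
  have smaller: "set_mset (\<Gamma> v - replicate_mset (a v) (Suc q)) \<subseteq> set_mset (\<Gamma> v)" for v
    by (auto dest: in_diffD)
  show ?thesis
    unfolding marked_colorings_def
  proof (intro CollectI conjI allI ballI impI)
    fix v
    assume "v \<notin> {1..n}"
    then show "\<Gamma> v - replicate_mset (a v) (Suc q) = {#}"
      using \<Gamma> by (simp add: marked_colorings_def)
  next
    fix v
    assume v: "v \<in> {1..n}"
    have "Suc q \<notin># \<Gamma> v - replicate_mset (a v) (Suc q)"
      using count_top[of v] by (simp add: not_in_iff)
    then show "set_mset (\<Gamma> v - replicate_mset (a v) (Suc q)) \<subseteq> {1..q}"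
      using \<Gamma> v smaller[of v] by (fastforce simp: marked_colorings_def le_Suc_eq)
    have "replicate_mset (a v) (Suc q) \<subseteq># \<Gamma> v"
      using count_top[of v] by (simp flip: count_le_replicate_mset_subset_eq)
    then show "size (\<Gamma> v - replicate_mset (a v) (Suc q)) = (m - a) v"
      using \<Gamma> v by (simp add: size_Diff_submset marked_colorings_def)
    fix c
    assume "v \<notin> Vsp"
    then have "count (\<Gamma> v) c \<le> 1"
      using \<Gamma> v by (simp add: marked_colorings_def)
    then show "count (\<Gamma> v - replicate_mset (a v) (Suc q)) c \<le> 1"
      by simp
  next
    fix e
    assume "e \<in> E"
    have "(\<Inter>v\<in>e. set_mset (\<Gamma> v - replicate_mset (a v) (Suc q))) \<subseteq> (\<Inter>v\<in>e. set_mset (\<Gamma> v))"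
      by (rule INF_mono') (rule smaller)
    then show "(\<Inter>v\<in>e. set_mset (\<Gamma> v - replicate_mset (a v) (Suc q))) = {}"
      using \<Gamma> \<open>e \<in> E\<close> by (auto simp: marked_colorings_def)
  qed
qed

lemma bij_betw_add_top_color:
  assumes "a \<le> m" "mon_supp a \<subseteq> {1..n}" "marked_indep n E Vsp (mon_mset n a)"
  shows "bij_betw (\<lambda>\<Gamma>' v. \<Gamma>' v + replicate_mset (a v) (Suc q))
    (marked_colorings n E Vsp (m - a) q) (colorings_with_top_color n E Vsp m q a)"
proof (rule bij_betw_byWitness[where f' = "\<lambda>\<Gamma> v. \<Gamma> v - replicate_mset (a v) (Suc q)"])
  have "\<Gamma> v - replicate_mset (a v) (Suc q) + replicate_mset (a v) (Suc q) = \<Gamma> v"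
    if "\<Gamma> \<in> colorings_with_top_color n E Vsp m q a" for \<Gamma> v
  proof (rule subset_mset.diff_add)
    show "replicate_mset (a v) (Suc q) \<subseteq># \<Gamma> v"
      using that by (simp add: colorings_with_top_color_def flip: count_le_replicate_mset_subset_eq)
  qed
  then show "\<forall>\<Gamma>\<in>colorings_with_top_color n E Vsp m q a.
      (\<lambda>v. \<Gamma> v - replicate_mset (a v) (Suc q) + replicate_mset (a v) (Suc q)) = \<Gamma>"
    by auto
qed (use assms add_top_color remove_top_color in auto)

lemma card_colorings_with_top_color:
  assumes "a \<le> m" and "mon_supp m \<subseteq> {1..n}"
  shows "(of_nat (card (colorings_with_top_color n E Vsp m q a)) :: rat) =
    I_mark n E Vsp a * of_nat (card (marked_colorings n E Vsp (m - a) q))"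
proof -
  have supp: "mon_supp a \<subseteq> {1..n}"
    using assms by (rule mon_supp_le_subset)
  show ?thesis
  proof (cases "marked_indep n E Vsp (mon_mset n a)")
    case True
    then show ?thesis
      using bij_betw_same_card[OF bij_betw_add_top_color[OF assms(1) supp True]] I_mark_eq[OF supp]
      by simp
  next
    case False
    then have "colorings_with_top_color n E Vsp m q a = {}"
      using marked_indep_top_color by blast
    then show ?thesis
      using False I_mark_eq[OF supp] by simp
  qed
qed

lemma card_marked_colorings_Suc:
  assumes supp: "mon_supp m \<subseteq> {1..n}"
  shows "(of_nat (card (marked_colorings n E Vsp m (Suc q))) :: rat) =
    (\<Sum>a\<le>m. I_mark n E Vsp a * of_nat (card (marked_colorings n E Vsp (m - a) q)))"
proof -
  have top_count_le: "(\<lambda>v. count (\<Gamma> v) (Suc q)) \<le> m" if "\<Gamma> \<in> marked_colorings n E Vsp m (Suc q)" for \<Gamma>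
    unfolding le_fun_def
  proof
    fix v
    show "count (\<Gamma> v) (Suc q) \<le> m v"
      using marked_coloringsD(1,3)[OF that, of v] count_le_size[of "\<Gamma> v" "Suc q"]
      by (cases "v \<in> {1..n}") auto
  qed
  have partition: "marked_colorings n E Vsp m (Suc q) = (\<Union>a\<le>m. colorings_with_top_color n E Vsp m q a)"
    using top_count_le by (auto simp: colorings_with_top_color_def)
  have "card (marked_colorings n E Vsp m (Suc q)) = (\<Sum>a\<le>m. card (colorings_with_top_color n E Vsp m q a))"
    unfolding partition
  proof (rule card_UN_disjoint)
    show "finite {..m}"
      by (rule finite_atMost_mon[OF finite_mon_supp_subset[OF supp]])
    show "\<forall>a\<in>{..m}. finite (colorings_with_top_color n E Vsp m q a)"
      by (auto intro: finite_subset[OF _ finite_marked_colorings] simp: colorings_with_top_color_def)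
  qed (auto simp: colorings_with_top_color_def fun_eq_iff)
  moreover have "of_nat (card (colorings_with_top_color n E Vsp m q a)) =
      I_mark n E Vsp a * of_nat (card (marked_colorings n E Vsp (m - a) q))" if "a \<le> m" for a
    using that supp by (rule card_colorings_with_top_color)
  ultimately show ?thesis
    by (simp add: of_nat_sum)
qed

lemma mfps_pow_I_mark:
  assumes "{} \<notin> E" and "mon_supp m \<subseteq> {1..n}"
  shows "mfps_pow (I_mark n E Vsp) q m = of_nat (card (marked_colorings n E Vsp m q))"
  using assms(2)
proof (induction q arbitrary: m)
  case 0
  then show ?case
    using card_marked_colorings_0[OF assms(1) 0] by simp
next
  case (Suc q)
  have "mfps_pow (I_mark n E Vsp) q (m - a) = of_nat (card (marked_colorings n E Vsp (m - a) q))" for a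
    by (rule Suc.IH[OF mon_supp_diff_subset[OF Suc.prems]])
  then have "mfps_pow (I_mark n E Vsp) (Suc q) m =
      (\<Sum>a\<le>m. I_mark n E Vsp a * of_nat (card (marked_colorings n E Vsp (m - a) q)))"
    by (simp add: mfps_mult_eq)
  also have "\<dots> = of_nat (card (marked_colorings n E Vsp m (Suc q)))"
    by (rule card_marked_colorings_Suc[OF Suc.prems, symmetric])
  finally show ?case .
qed

theorem theorem4p3:
  fixes n :: nat and E :: "nat set set" and Vsp :: "nat set"
  assumes "\<forall>e\<in>E. e \<subseteq> {1..n} \<and> e \<noteq> {}"
    and "Vsp \<subseteq> {1..n}"
  shows "\<forall>m. mon_supp m \<subseteq> {1..n} \<longrightarrow>
           (\<exists>P :: rat poly.
              (\<forall>q::nat. q > 0 \<longrightarrow> poly P (of_nat q) = of_nat (card (marked_colorings n E Vsp m q))) \<and>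
              (\<forall>q::int. mfps_ipow n (I_mark n E Vsp) q m = poly P (of_int q)))"
proof (intro allI impI)
  fix m :: "nat \<Rightarrow> nat"
  assume supp: "mon_supp m \<subseteq> {1..n}"
  have "{} \<notin> E"
    using assms(1) by auto
  then have const: "I_mark n E Vsp (\<lambda>_. 0) = 1"
    by (rule I_mark_zero)
  let ?P = "mfps_power_poly (I_mark n E Vsp) m"
  have "poly ?P (of_nat q) = of_nat (card (marked_colorings n E Vsp m q))" for q
    using poly_mfps_power_poly_of_nat[of "I_mark n E Vsp", OF const finite_mon_supp_subset[OF supp]]
      mfps_pow_I_mark[OF \<open>{} \<notin> E\<close> supp] by simp
  moreover have "mfps_ipow n (I_mark n E Vsp) q m = poly ?P (of_int q)" for q
    by (rule mfps_ipow_eq_poly[of "I_mark n E Vsp", OF const supp])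
  ultimately show "\<exists>P :: rat poly.
      (\<forall>q::nat. q > 0 \<longrightarrow> poly P (of_nat q) = of_nat (card (marked_colorings n E Vsp m q))) \<and>
      (\<forall>q::int. mfps_ipow n (I_mark n E Vsp) q m = poly P (of_int q))"
    by blast
qed

end
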